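(* Let $k,\ell$ be positive integers, $0<\sigma\le 1$, $1<p\le 2$ and $H\colon\mathbb{N}\to\mathbb{R}$ a growth function. Set $L=\lceil\ell\,\sigma^{-2}(p-1)^{-1}\rceil$ and define $(n_i)$ by $n_0=0$ and $n_{i+1}=n_i+\lceil\sigma^2\,\ell\,H(n_i)^2(p-1)^{-1}\rceil$. Let $(\Omega,\mathcal{F},\mathbb{P})$ be a probability space and $(\Sigma_i)_{i\in\mathbb{N}}$ an increasing sequence of $k$-semirings on $\Omega$ with $\Sigma_i\subseteq\mathcal{F}$ for all $i$. Let $\mathcal{C}$ be a family in $L_p(\Omega,\mathcal{F},\mathbb{P})$ with $|\mathcal{C}|=\ell$ and $\|f\|_{L_p}\le 1$ for every $f\in\mathcal{C}$. Then there exist $j\in\{0,\dots,L-1\}$, $J\in\{n_j,\dots,n_{j+1}\}$ and partitions $\mathcal{P},\mathcal{Q}$ of $\Omega$ such that: (i) $\mathcal{P}\subseteq\Sigma_{n_j}$ and $\mathcal{Q}\subseteq\Sigma_J$; (ii) $|\mathcal{P}|\le(k+1)^{n_j}$ and $|\mathcal{Q}|\le(k+1)^J$; (iii) $\mathcal{Q}$ is a refinement of $\mathcal{P}$; (iv) for every $f\in\mathcal{C}$, $\|\mathbb{E}(f\mid\mathcal{A}_{\mathcal{Q}})-\mathbb{E}(f\mid\mathcal{A}_{\mathcal{P}})\|_{L_p}\le\sigma$ and $\|f-\mathbb{E}(f\mid\mathcal{A}_{\mathcal{Q}})\|_{\Sigma_{J+1}}\le 1/H(n_j)$.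
   Context: $\mathbb{N}=\{0,1,2,\dots\}$. A growth function is an increasing function $H$ with $H(n)\ge n+1$ for all $n\in\mathbb{N}$. A collection $\Sigma$ of subsets of a nonempty set $\Omega$ is a $k$-semiring on $\Omega$ if: $\emptyset,\Omega\in\Sigma$; $S\cap T\in\Sigma$ for $S,T\in\Sigma$; for $S,T\in\Sigma$ there exist $\ell'\in\{1,\dots,k\}$ and pairwise disjoint $R_1,\dots,R_{\ell'}\in\Sigma$ with $S\setminus T=R_1\cup\dots\cup R_{\ell'}$. The $\Sigma$-uniformity norm is $\|g\|_{\Sigma}=\sup\{|\int_S g\,d\mathbb{P}|:S\in\Sigma\}$. For a finite partition $\mathcal{P}$, $\mathcal{A}_{\mathcal{P}}$ is the $\sigma$-algebra generated by $\mathcal{P}$; $\mathcal{P}\subseteq\Sigma$ means every member of $\mathcal{P}$ lies in $\Sigma$. *)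

theory Defs
  imports "HOL-Probability.Probability"
begin

definition growth_function :: "(nat \<Rightarrow> real) \<Rightarrow> bool" where
  "growth_function H \<longleftrightarrow> mono H \<and> (\<forall>n. H n \<ge> real n + 1)"

definition k_semiring :: "nat \<Rightarrow> 'a set \<Rightarrow> 'a set set \<Rightarrow> bool" where
  "k_semiring k \<Omega> \<Sigma> \<longleftrightarrow>
     \<Omega> \<noteq> {} \<and> \<Sigma> \<subseteq> Pow \<Omega> \<and> {} \<in> \<Sigma> \<and> \<Omega> \<in> \<Sigma> \<and>
     (\<forall>S\<in>\<Sigma>. \<forall>T\<in>\<Sigma>. S \<inter> T \<in> \<Sigma>) \<and>
     (\<forall>S\<in>\<Sigma>. \<forall>T\<in>\<Sigma>. \<exists>l::nat. \<exists>R::nat \<Rightarrow> 'a set.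
        1 \<le> l \<and> l \<le> k \<and> (\<forall>i<l. R i \<in> \<Sigma>) \<and> disjoint_family_on R {..<l} \<and>
        S - T = (\<Union>i<l. R i))"

definition in_Lp :: "'a measure \<Rightarrow> real \<Rightarrow> ('a \<Rightarrow> real) \<Rightarrow> bool" where
  "in_Lp M p f \<longleftrightarrow> f \<in> borel_measurable M \<and> integrable M (\<lambda>x. \<bar>f x\<bar> powr p)"

definition Lp_norm :: "'a measure \<Rightarrow> real \<Rightarrow> ('a \<Rightarrow> real) \<Rightarrow> real" where
  "Lp_norm M p f = (\<integral>x. \<bar>f x\<bar> powr p \<partial>M) powr (1 / p)"

definition unif_norm :: "'a measure \<Rightarrow> 'a set set \<Rightarrow> ('a \<Rightarrow> real) \<Rightarrow> real" where
  "unif_norm M \<Sigma> g = (SUP S\<in>\<Sigma>. \<bar>set_lebesgue_integral M S g\<bar>)"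

definition finite_partition :: "'a set \<Rightarrow> 'a set set \<Rightarrow> bool" where
  "finite_partition \<Omega> P \<longleftrightarrow> finite P \<and> partition_on \<Omega> P"

definition part_algebra :: "'a measure \<Rightarrow> 'a set set \<Rightarrow> 'a measure" where
  "part_algebra M P = sigma (space M) P"

definition refines :: "'a set set \<Rightarrow> 'a set set \<Rightarrow> bool" where
  "refines Q P \<longleftrightarrow> (\<forall>B\<in>Q. \<exists>A\<in>P. B \<subseteq> A)"

fun n_seq :: "real \<Rightarrow> nat \<Rightarrow> real \<Rightarrow> (nat \<Rightarrow> real) \<Rightarrow> nat \<Rightarrow> nat" where
  "n_seq \<sigma> l p H 0 = 0"
| "n_seq \<sigma> l p H (Suc i) =
     n_seq \<sigma> l p H i + nat \<lceil>\<sigma>^2 * real l * (H (n_seq \<sigma> l p H i))^2 / (p - 1)\<rceil>"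

definition L_bound :: "real \<Rightarrow> nat \<Rightarrow> real \<Rightarrow> nat" where
  "L_bound \<sigma> l p = nat \<lceil>real l / (\<sigma>^2 * (p - 1))\<rceil>"

end

(*
  Energy increment. For a finite partition P write E_P g for the conditional expectation
  on the algebra generated by P and let the energy of P be the sum over i of
  ||E_P f_i||_p^2; it never exceeds l. Since L_p is 2-uniformly convex for 1 < p <= 2
  (in the sharp form of Ricard and Xu), refining P to Q raises the energy by at least
  (p - 1) ||E_Q f_i - E_P f_i||_p^2. Inside the j-th block of levels we keep refining:
  a set S of Sigma_(J+1) over which f_i - E_Q f_i integrates to more than 1/H(n_j) is
  made measurable by splitting every cell of Q with the k-semiring, which multiplies the
  number of cells by at most k + 1 and, since that integral is also the integral over S
  of E_Q' f_i - E_Q f_i, raises the energy by (p - 1)/H(n_j)^2. After n_(j+1) - n_j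
  such steps, or as soon as some E_Q f_i drifts further than sigma from E_P f_i, the
  energy has grown by more than (p - 1) sigma^2, which cannot happen in all of the L blocks.
*)

theory Submission
  imports Defs
begin

section \<open>Elementary inequalities\<close>

lemma one_plus_powr_add_one_minus_powr_ge:
  fixes s x :: real assumes "s \<le> 0" "0 \<le> x" "x < 1"
  shows "2 \<le> (1 + x) powr s + (1 - x) powr s"
proof -
  define A B where "A = (1 + x) powr s" and "B = (1 - x) powr s"
  have pos: "0 < 1 - x^2" using assms by (simp add: abs_square_less_1)
  have "(1 - x^2) powr 0 \<le> (1 - x^2) powr s"
    using assms pos by (intro powr_mono') auto
  also have "(1 - x^2) powr s = A * B"
    using assms by (simp add: A_def B_def powr_mult[symmetric] power2_eq_square algebra_simps)
  finally have AB: "1 \<le> A * B" using pos by simp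
  have "0 \<le> (A - B)^2" by simp
  then have "4 \<le> (A + B)^2" using AB by (simp add: power2_eq_square algebra_simps)
  moreover have "0 \<le> A + B" by (simp add: A_def B_def)
  ultimately show ?thesis
    using power2_le_imp_le[of 2 "A + B"] by (simp add: A_def B_def)
qed

lemma one_plus_powr_diff_one_minus_powr_ge:
  fixes q w :: real assumes "0 < q" "q \<le> 1" "0 \<le> w" "w < 1"
  shows "2 * q * w \<le> (1 + w) powr q - (1 - w) powr q"
proof -
  let ?h = "\<lambda>x. (1 + x) powr q - (1 - x) powr q - 2 * q * x"
  have "?h 0 \<le> ?h w"
  proof (rule DERIV_nonneg_imp_increasing_open[of 0 w ?h])
    fix x assume x: "0 < x" "x < w"
    have "(?h has_real_derivative q * ((1 + x) powr (q - 1) + (1 - x) powr (q - 1)) - 2 * q) (at x)"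
      using x assms by (auto intro!: derivative_eq_intros simp: algebra_simps)
    moreover have "q * 2 \<le> q * ((1 + x) powr (q - 1) + (1 - x) powr (q - 1))"
      using x assms by (intro mult_left_mono one_plus_powr_add_one_minus_powr_ge) auto
    ultimately show "\<exists>y. (?h has_real_derivative y) (at x) \<and> 0 \<le> y" by force
  qed (use assms in \<open>auto intro!: continuous_intros\<close>)
  then show ?thesis by simp
qed

lemma two_point_ineq_unit:
  fixes p w :: real assumes "1 < p" "p \<le> 2" "0 \<le> w" "w \<le> 1"
  shows "(1 + (p - 1) * w^2) powr (p / 2) \<le> ((1 + w) powr p + (1 - w) powr p) / 2"
proof -
  let ?G = "\<lambda>x. ((1 + x) powr p + (1 - x) powr p) / 2 - (1 + (p - 1) * x^2) powr (p / 2)"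
  have pos: "0 < 1 + (p - 1) * x^2" for x
    using assms by (intro add_pos_nonneg) auto
  have "?G 0 \<le> ?G w"
  proof (rule DERIV_nonneg_imp_increasing_open[of 0 w ?G])
    fix x assume x: "0 < x" "x < w"
    define R where "R = (1 + x) powr (p - 1) - (1 - x) powr (p - 1)"
    define Y where "Y = (1 + (p - 1) * x^2) powr (p / 2 - 1) * (2 * (p - 1) * x)"
    have deriv: "(?G has_real_derivative
       (p * (1 + x) powr (p - 1) - p * (1 - x) powr (p - 1)) / 2
        - (p / 2) * (1 + (p - 1) * x^2) powr (p / 2 - 1) * ((p - 1) * (2 * x))) (at x)"
      using x assms pos[of x]
      by (auto intro!: derivative_eq_intros simp: power2_eq_square field_simps)
    have "(p * (1 + x) powr (p - 1) - p * (1 - x) powr (p - 1)) / 2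
        - (p / 2) * (1 + (p - 1) * x^2) powr (p / 2 - 1) * ((p - 1) * (2 * x)) = (p / 2) * (R - Y)"
      by (simp add: R_def Y_def field_simps)
    with deriv have "(?G has_real_derivative (p / 2) * (R - Y)) (at x)" by (simp only:)
    moreover have "Y \<le> 2 * (p - 1) * x"
    proof -
      have "(1 + (p - 1) * x^2) powr (p / 2 - 1) \<le> (1 + (p - 1) * x^2) powr 0"
        using assms by (intro powr_mono) auto
      then have "(1 + (p - 1) * x^2) powr (p / 2 - 1) \<le> 1"
        using pos[of x] by (simp only: powr_zero_eq_one if_False less_irrefl) simp
      then have "Y \<le> 1 * (2 * (p - 1) * x)"
        unfolding Y_def by (rule mult_right_mono) (use assms x in simp)
      then show ?thesis by simp
    qed
    moreover have "2 * (p - 1) * x \<le> R"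
      unfolding R_def using x assms by (intro one_plus_powr_diff_one_minus_powr_ge) auto
    ultimately show "\<exists>y. (?G has_real_derivative y) (at x) \<and> 0 \<le> y"
      using assms by (intro exI[of _ "(p / 2) * (R - Y)"]) (auto intro!: mult_nonneg_nonneg)
  next
    show "continuous_on {0..w} ?G"
      using assms pos by (intro continuous_intros continuous_on_powr') auto
  qed (use assms in auto)
  then show ?thesis by simp
qed

lemma power2_powr_half:
  fixes x p :: real
  shows "(x^2) powr (p / 2) = \<bar>x\<bar> powr p"
proof (cases "x = 0")
  case False
  have "\<bar>x\<bar> powr 2 = x^2" using False by (simp add: powr_numeral)
  then have "(x^2) powr (p / 2) = (\<bar>x\<bar> powr 2) powr (p / 2)" by (simp only:)
  also have "\<dots> = \<bar>x\<bar> powr (2 * (p / 2))" by (rule powr_powr)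
  finally show ?thesis by simp
qed simp

lemma two_point_ineq_ordered:
  fixes p A B :: real assumes p: "1 < p" "p \<le> 2" and AB: "0 < A" "0 \<le> B" "B \<le> A"
  shows "(A^2 + (p - 1) * B^2) powr (p / 2) \<le> ((A + B) powr p + (A - B) powr p) / 2"
proof -
  define w where "w = B / A"
  have w: "0 \<le> w" "w \<le> 1" using AB by (auto simp: w_def)
  have B: "B = A * w" using AB by (simp add: w_def)
  have e1: "A^2 + (p - 1) * B^2 = A^2 * (1 + (p - 1) * w^2)" by (simp add: B algebra_simps power2_eq_square)
  have "0 \<le> (p - 1) * w^2" using p by simp
  then have pos: "0 \<le> 1 + (p - 1) * w^2" by linarith
  have A2: "(A^2) powr (p / 2) = A powr p" using AB by (simp add: power2_powr_half)
  have "(A^2 + (p - 1) * B^2) powr (p / 2) = A powr p * (1 + (p - 1) * w^2) powr (p / 2)"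
    unfolding e1 using pos by (simp add: powr_mult A2)
  also have "\<dots> \<le> A powr p * (((1 + w) powr p + (1 - w) powr p) / 2)"
    using two_point_ineq_unit[OF p w] by (intro mult_left_mono) auto
  also have "\<dots> = ((A * (1 + w)) powr p + (A * (1 - w)) powr p) / 2"
  proof -
    have h1: "(A * (1 + w)) powr p = A powr p * (1 + w) powr p" using AB w by (simp add: powr_mult)
    have h2: "(A * (1 - w)) powr p = A powr p * (1 - w) powr p" using AB w by (simp add: powr_mult)
    show ?thesis unfolding h1 h2 by (simp add: algebra_simps)
  qed
  also have "\<dots> = ((A + B) powr p + (A - B) powr p) / 2" by (simp add: B algebra_simps)
  finally show ?thesis .
qed

lemma two_point_ineq:
  fixes p u v :: real assumes p: "1 < p" "p \<le> 2"
  shows "(u^2 + (p - 1) * v^2) powr (p / 2) \<le> (\<bar>u + v\<bar> powr p + \<bar>u - v\<bar> powr p) / 2"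
proof -
  define A where "A = max \<bar>u\<bar> \<bar>v\<bar>"
  define B where "B = min \<bar>u\<bar> \<bar>v\<bar>"
  have AB: "0 \<le> B" "B \<le> A" by (auto simp: A_def B_def)
  have sums: "(\<bar>u + v\<bar> = A + B \<and> \<bar>u - v\<bar> = A - B) \<or> (\<bar>u + v\<bar> = A - B \<and> \<bar>u - v\<bar> = A + B)"
    unfolding A_def B_def by (auto simp: max_def min_def abs_if)
  then have R: "\<bar>u + v\<bar> powr p + \<bar>u - v\<bar> powr p = (A + B) powr p + (A - B) powr p" by auto
  have sq: "u^2 + (p - 1) * v^2 \<le> A^2 + (p - 1) * B^2"
  proof (cases "\<bar>v\<bar> \<le> \<bar>u\<bar>")
    case True then show ?thesis by (simp add: A_def B_def max_def min_def)
  next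
    case False
    then have "A = \<bar>v\<bar>" "B = \<bar>u\<bar>" by (auto simp: A_def B_def)
    then have "A^2 = v^2" "B^2 = u^2" by auto
    moreover have "u^2 \<le> v^2" using False by (simp add: abs_le_square_iff)
    moreover have "(2 - p) * u^2 \<le> (2 - p) * v^2" using p calculation by (intro mult_left_mono) auto
    ultimately show ?thesis by (simp add: algebra_simps)
  qed
  show ?thesis
  proof (cases "A = 0")
    case True
    then have "u = 0" "v = 0" by (auto simp: A_def max_def split: if_splits)
    then show ?thesis by simp
  next
    case False
    then have "0 < A" using AB by linarith
    have "0 \<le> (p - 1) * v^2" using p by simp
    then have "0 \<le> u^2 + (p - 1) * v^2" by (smt (verit) zero_le_power2)
    then have "(u^2 + (p - 1) * v^2) powr (p / 2) \<le> (A^2 + (p - 1) * B^2) powr (p / 2)"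
      using sq p by (intro powr_mono2) auto
    also have "\<dots> \<le> ((A + B) powr p + (A - B) powr p) / 2"
      using two_point_ineq_ordered[OF p \<open>0 < A\<close> AB] .
    finally show ?thesis using R by simp
  qed
qed

lemma convex_on_nonneg_powr:
  fixes p :: real assumes "1 \<le> p"
  shows "convex_on {0..} (\<lambda>x. x powr p)"
proof (rule convex_on_linorderI)
  fix t x y :: real assume t: "0 < t" "t < 1" and xy: "x \<in> {0..}" "y \<in> {0..}" "x < y"
  show "((1 - t) *\<^sub>R x + t *\<^sub>R y) powr p \<le> (1 - t) * x powr p + t * y powr p"
  proof (cases "x = 0")
    case True
    have "t powr p \<le> t powr 1" using t assms by (intro powr_mono') auto
    then have "(t * y) powr p \<le> t * y powr p"
      using t xy by (auto simp: powr_mult intro: mult_right_mono)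
    then show ?thesis using True assms by simp
  next
    case False
    then show ?thesis
      using convex_onD[OF powr_convex[OF assms], of t x y] t xy by simp
  qed
qed simp

lemma convex_on_abs_powr:
  fixes p :: real assumes "1 \<le> p"
  shows "convex_on UNIV (\<lambda>x::real. \<bar>x\<bar> powr p)"
proof (rule convex_onI)
  fix t x y :: real assume t: "0 < t" "t < 1"
  have "\<bar>(1 - t) * x + t * y\<bar> \<le> (1 - t) * \<bar>x\<bar> + t * \<bar>y\<bar>"
    using abs_triangle_ineq[of "(1 - t) * x" "t * y"] t by (simp add: abs_mult)
  then have "\<bar>(1 - t) * x + t * y\<bar> powr p \<le> ((1 - t) * \<bar>x\<bar> + t * \<bar>y\<bar>) powr p"
    using assms by (intro powr_mono2) auto
  also have "\<dots> \<le> (1 - t) * \<bar>x\<bar> powr p + t * \<bar>y\<bar> powr p"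
    using convex_onD[OF convex_on_nonneg_powr[OF assms], of t "\<bar>x\<bar>" "\<bar>y\<bar>"] t by simp
  finally show "\<bar>(1 - t) *\<^sub>R x + t *\<^sub>R y\<bar> powr p \<le> (1 - t) * \<bar>x\<bar> powr p + t * \<bar>y\<bar> powr p"
    by simp
qed auto

lemma concave_on_powr:
  fixes q :: real assumes "0 < q" "q \<le> 1"
  shows "concave_on {0<..} (\<lambda>x::real. x powr q)"
proof (rule f''_le0_imp_concave[where f' = "\<lambda>x. q * x powr (q - 1)" and f'' = "\<lambda>x. q * ((q - 1) * x powr (q - 1 - 1))"])
  fix x :: real assume x: "x \<in> {0<..}"
  show "((\<lambda>x. x powr q) has_real_derivative q * x powr (q - 1)) (at x)"
    using x by (auto intro!: derivative_eq_intros)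
  show "((\<lambda>x. q * x powr (q - 1)) has_real_derivative q * ((q - 1) * x powr (q - 1 - 1))) (at x)"
    using x by (auto intro!: derivative_eq_intros)
  show "q * ((q - 1) * x powr (q - 1 - 1)) \<le> 0"
    using assms x by (intro mult_nonneg_nonpos mult_nonpos_nonneg) auto
qed auto

lemma powr_add_ge_weighted:
  fixes q t a b :: real assumes q: "0 < q" "q \<le> 1" and t: "0 < t" "t < 1" and ab: "0 \<le> a" "0 \<le> b"
  shows "t powr (1 - q) * a powr q + (1 - t) powr (1 - q) * b powr q \<le> (a + b) powr q"
proof -
  have le1: "x powr (1 - q) \<le> 1" if "0 < x" "x \<le> 1" for x :: real
    using that q powr_mono'[of 0 "1 - q" x] by simp
  consider "a = 0" | "b = 0" | "0 < a" "0 < b" using ab by linarith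
  then show ?thesis
  proof cases
    case 1
    then show ?thesis using le1[of "1 - t"] t q mult_right_mono[of _ 1 "b powr q"] by simp
  next
    case 2
    then show ?thesis using le1[of t] t q mult_right_mono[of _ 1 "a powr q"] by simp
  next
    case 3
    have "t * (a / t) powr q + (1 - t) * (b / (1 - t)) powr q \<le> (t * (a / t) + (1 - t) * (b / (1 - t))) powr q"
      using concave_onD[OF concave_on_powr[OF q], of "1 - t" "a / t" "b / (1 - t)"] t 3 by simp
    moreover have "t * (a / t) powr q = t powr (1 - q) * a powr q"
      and "(1 - t) * (b / (1 - t)) powr q = (1 - t) powr (1 - q) * b powr q"
      using t 3 by (simp_all add: powr_divide powr_diff)
    ultimately show ?thesis using t by simp
  qed
qed

lemma midpoint_quadratic_gain:
  fixes \<phi> :: "real \<Rightarrow> real" and c :: real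
  assumes c: "0 \<le> c"
    and min0: "\<And>t. 0 \<le> t \<Longrightarrow> t \<le> 1 \<Longrightarrow> \<phi> 0 \<le> \<phi> t"
    and mid: "\<And>h. 0 < h \<Longrightarrow> h \<le> 1 \<Longrightarrow> 2 * \<phi> (h / 2) + 2 * c * (h / 2)^2 \<le> \<phi> 0 + \<phi> h"
  shows "\<phi> 0 + c \<le> \<phi> 1"
proof -
  define \<psi> where "\<psi> t = \<phi> t - c * t^2" for t
  define D where "D = \<psi> 1 - \<psi> 0"
  \<comment> \<open>\<psi> lies below its chord at the dyadic points, and \<phi> 0 \<le> \<phi> t forbids a negative slope.\<close>
  have chord: "\<psi> (1 / 2^n) \<le> \<psi> 0 + D / 2^n" for n :: nat
  proof (induction n)
    case (Suc n)
    define h :: real where "h = 1 / 2^n"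
    have "2 * \<phi> (h / 2) + 2 * c * (h / 2)^2 \<le> \<phi> 0 + \<phi> h"
      by (rule mid) (auto simp: h_def)
    then have "\<psi> (h / 2) \<le> (\<psi> 0 + \<psi> h) / 2"
      by (simp add: \<psi>_def power2_eq_square field_simps)
    also have "\<dots> \<le> \<psi> 0 + D * (h / 2)"
      using Suc.IH by (simp add: h_def field_simps)
    finally show ?case by (simp add: h_def mult.commute)
  qed (simp add: D_def)
  have "- c / 2^n \<le> D" for n :: nat
  proof -
    define h :: real where "h = 1 / 2^n"
    have h: "0 < h" "h \<le> 1" by (auto simp: h_def)
    have "\<psi> 0 - c * h^2 \<le> \<psi> h" using min0[of h] h by (simp add: \<psi>_def)
    also have "\<dots> \<le> \<psi> 0 + D * h" using chord[of n] by (simp add: h_def)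
    finally have "(- c * h) * h \<le> D * h" by (simp add: power2_eq_square)
    then have "- c * h \<le> D" using h(1) by (rule mult_right_le_imp_le)
    then show ?thesis by (simp add: h_def)
  qed
  moreover have "(\<lambda>n. - c / 2^n) \<longlonglongrightarrow> 0"
    by (intro tendsto_divide_0[OF tendsto_const] filterlim_realpow_sequentially_gt1) simp
  ultimately have "0 \<le> D"
    by (intro tendsto_upperbound[of "\<lambda>n. - c / 2^n"]) auto
  then show ?thesis by (simp add: D_def \<psi>_def)
qed

section \<open>Estimates in L_p\<close>

lemma abs_add_powr_le:
  fixes s t p :: real assumes "0 \<le> p"
  shows "\<bar>s + t\<bar> powr p \<le> 2 powr p * (\<bar>s\<bar> powr p + \<bar>t\<bar> powr p)"
proof -
  have "\<bar>s + t\<bar> \<le> 2 * max \<bar>s\<bar> \<bar>t\<bar>" using abs_triangle_ineq[of s t] by (auto simp: max_def)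
  then have "\<bar>s + t\<bar> powr p \<le> (2 * max \<bar>s\<bar> \<bar>t\<bar>) powr p" using assms by (intro powr_mono2) auto
  also have "\<dots> = 2 powr p * (max \<bar>s\<bar> \<bar>t\<bar>) powr p" by (simp add: powr_mult)
  also have "\<dots> \<le> 2 powr p * (\<bar>s\<bar> powr p + \<bar>t\<bar> powr p)"
    by (intro mult_left_mono) (auto simp: max_def)
  finally show ?thesis .
qed

lemma in_Lp_add:
  assumes "in_Lp M p f" "in_Lp M p g" "0 \<le> p"
  shows "in_Lp M p (\<lambda>x. f x + g x)"
proof -
  have [measurable]: "f \<in> borel_measurable M" "g \<in> borel_measurable M"
    using assms by (auto simp: in_Lp_def)
  have "integrable M (\<lambda>x. 2 powr p * (\<bar>f x\<bar> powr p + \<bar>g x\<bar> powr p))"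
    using assms by (auto simp: in_Lp_def)
  then have "integrable M (\<lambda>x. \<bar>f x + g x\<bar> powr p)"
    by (rule Bochner_Integration.integrable_bound) (use abs_add_powr_le[OF assms(3)] in auto)
  then show ?thesis by (simp add: in_Lp_def)
qed

lemma in_Lp_cmult:
  assumes "in_Lp M p f"
  shows "in_Lp M p (\<lambda>x. c * f x)"
proof -
  have [measurable]: "f \<in> borel_measurable M" using assms by (auto simp: in_Lp_def)
  have "integrable M (\<lambda>x. \<bar>c\<bar> powr p * \<bar>f x\<bar> powr p)"
    using assms by (auto simp: in_Lp_def)
  then show ?thesis by (simp add: in_Lp_def abs_mult powr_mult)
qed

lemma in_Lp_diff:
  assumes "in_Lp M p f" "in_Lp M p g" "0 \<le> p"
  shows "in_Lp M p (\<lambda>x. f x - g x)"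
  using in_Lp_add[OF assms(1) in_Lp_cmult[OF assms(2), of "-1"] assms(3)] by simp

lemma Lp_norm_nonneg: "0 \<le> Lp_norm M p g"
  by (simp add: Lp_norm_def)

lemma Lp_norm_cmult:
  assumes "0 < p"
  shows "Lp_norm M p (\<lambda>x. c * g x) = \<bar>c\<bar> * Lp_norm M p g"
proof -
  have "0 \<le> (\<integral>x. \<bar>g x\<bar> powr p \<partial>M)" by (intro integral_nonneg_AE) auto
  then show ?thesis
    using assms by (simp add: Lp_norm_def abs_mult powr_mult powr_powr)
qed

lemma Lp_norm_power2:
  assumes "0 < p"
  shows "Lp_norm M p g ^ 2 = (\<integral>x. \<bar>g x\<bar> powr p \<partial>M) powr (2 / p)"
  by (cases "(\<integral>x. \<bar>g x\<bar> powr p \<partial>M) = 0") (simp_all add: Lp_norm_def powr_power)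

lemma Lp_norm_mono:
  assumes "0 < p" "integrable M (\<lambda>x. \<bar>g x\<bar> powr p)" "integrable M (\<lambda>x. \<bar>h x\<bar> powr p)"
    and "AE x in M. \<bar>g x\<bar> powr p \<le> \<bar>h x\<bar> powr p"
  shows "Lp_norm M p g \<le> Lp_norm M p h"
  unfolding Lp_norm_def using assms
  by (intro powr_mono2 integral_mono_AE integral_nonneg_AE) auto

context prob_space
begin

lemma in_Lp_integrable:
  assumes "in_Lp M p f" "1 \<le> p"
  shows "integrable M f"
proof -
  have [measurable]: "f \<in> borel_measurable M" using assms by (auto simp: in_Lp_def)
  have "\<bar>y\<bar> \<le> 1 + \<bar>y\<bar> powr p" for y :: real
  proof (cases "\<bar>y\<bar> \<le> 1")
    case False
    then have "\<bar>y\<bar> powr 1 \<le> \<bar>y\<bar> powr p" using assms by (intro powr_mono) auto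
    then show ?thesis using False by simp
  qed (use powr_ge_zero[of "\<bar>y\<bar>" p] in linarith)
  moreover have "integrable M (\<lambda>x. 1 + \<bar>f x\<bar> powr p)"
    using assms by (auto simp: in_Lp_def)
  ultimately show ?thesis
    by (intro Bochner_Integration.integrable_bound[of _ "\<lambda>x. 1 + \<bar>f x\<bar> powr p" f] AE_I2) auto
qed

lemma abs_set_integral_le_Lp_norm:
  assumes S: "S \<in> sets M" and g: "in_Lp M p g" and p: "1 \<le> p"
  shows "\<bar>set_lebesgue_integral M S g\<bar> \<le> Lp_norm M p g"
proof -
  have [measurable]: "g \<in> borel_measurable M" "S \<in> sets M" using g S by (auto simp: in_Lp_def)
  let ?X = "\<lambda>x. indicator S x * g x"
  have iX: "integrable M ?X"
    using integrable_mult_indicator[OF S in_Lp_integrable[OF g p]] by simp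
  have bound: "\<bar>?X x\<bar> powr p \<le> \<bar>g x\<bar> powr p" for x
    by (auto simp: indicator_def)
  have ig: "integrable M (\<lambda>x. \<bar>g x\<bar> powr p)" using g by (simp add: in_Lp_def)
  have iqX: "integrable M (\<lambda>x. \<bar>?X x\<bar> powr p)"
    by (rule Bochner_Integration.integrable_bound[OF ig]) (use bound in auto)
  have jensen: "\<bar>expectation ?X\<bar> powr p \<le> expectation (\<lambda>x. \<bar>?X x\<bar> powr p)"
    by (rule jensens_inequality[where I = UNIV and q = "\<lambda>x. \<bar>x\<bar> powr p"])
       (use iX iqX convex_on_abs_powr[OF p] in auto)
  have "(\<bar>expectation ?X\<bar> powr p) powr (1 / p) \<le> Lp_norm M p ?X"
    unfolding Lp_norm_def by (rule powr_mono2[OF _ _ jensen]) (use p in auto)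
  also have "\<dots> \<le> Lp_norm M p g"
    using p iqX ig bound by (intro Lp_norm_mono) auto
  finally have "(\<bar>expectation ?X\<bar> powr p) powr (1 / p) \<le> Lp_norm M p g" .
  moreover have "(\<bar>expectation ?X\<bar> powr p) powr (1 / p) = \<bar>expectation ?X\<bar>"
    using p by (simp add: powr_powr)
  ultimately show ?thesis by (simp add: set_lebesgue_integral_def)
qed

end

section \<open>Uniform convexity of L_p\<close>

lemma reverse_Minkowski_powr:
  fixes F G :: "'a \<Rightarrow> real" and q :: real
  assumes q: "0 < q" "q \<le> 1"
    and nonneg: "\<And>x. 0 \<le> F x" "\<And>x. 0 \<le> G x"
    and iF: "integrable M (\<lambda>x. F x powr q)" and iG: "integrable M (\<lambda>x. G x powr q)"
    and iFG: "integrable M (\<lambda>x. (F x + G x) powr q)"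
  shows "(\<integral>x. F x powr q \<partial>M) powr (1 / q) + (\<integral>x. G x powr q \<partial>M) powr (1 / q)
           \<le> (\<integral>x. (F x + G x) powr q \<partial>M) powr (1 / q)"
proof -
  define IF IG IFG where "IF = (\<integral>x. F x powr q \<partial>M)" and "IG = (\<integral>x. G x powr q \<partial>M)"
    and "IFG = (\<integral>x. (F x + G x) powr q \<partial>M)"
  have IF0: "0 \<le> IF" and IG0: "0 \<le> IG" unfolding IF_def IG_def by (auto intro!: integral_nonneg_AE)
  have "IF \<le> IFG" unfolding IF_def IFG_def
    by (rule integral_mono[OF iF iFG]) (use nonneg q in \<open>auto intro!: powr_mono2\<close>)
  have "IG \<le> IFG" unfolding IG_def IFG_def
    by (rule integral_mono[OF iG iFG]) (use nonneg q in \<open>auto intro!: powr_mono2\<close>)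
  define a b where "a = IF powr (1 / q)" and "b = IG powr (1 / q)"
  have aq: "a powr q = IF" and bq: "b powr q = IG" using IF0 IG0 q by (simp_all add: a_def b_def powr_powr)
  have "a + b \<le> IFG powr (1 / q)"
  proof (cases "IF = 0 \<or> IG = 0")
    case True
    then show ?thesis
      using \<open>IF \<le> IFG\<close> \<open>IG \<le> IFG\<close> IF0 IG0 q by (auto simp: powr_mono2 a_def b_def)
  next
    case False
    then have "0 < a" "0 < b" using IF0 IG0 by (auto simp: a_def b_def)
    define S where "S = a + b"
    define t where "t = a / S"
    have S: "0 < S" using \<open>0 < a\<close> \<open>0 < b\<close> by (simp add: S_def)
    have t: "0 < t" "t < 1" using \<open>0 < a\<close> \<open>0 < b\<close> by (auto simp: t_def S_def field_simps)
    have aS: "a = t * S" and bS: "b = (1 - t) * S" using S by (auto simp: t_def S_def field_simps)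
    have IF: "IF = t powr q * S powr q"
      unfolding aq[symmetric] aS using t S by (simp add: powr_mult)
    have IG: "IG = (1 - t) powr q * S powr q"
      unfolding bq[symmetric] bS using t S by (simp add: powr_mult)
    have t_powr: "t powr (1 - q) * t powr q = t" "(1 - t) powr (1 - q) * (1 - t) powr q = 1 - t"
      using t by (simp_all add: powr_add[symmetric])
    have "S powr q = t powr (1 - q) * IF + (1 - t) powr (1 - q) * IG"
      unfolding IF IG mult.assoc[symmetric] t_powr by (simp add: algebra_simps)
    also have "\<dots> = (\<integral>x. t powr (1 - q) * F x powr q + (1 - t) powr (1 - q) * G x powr q \<partial>M)"
      using iF iG by (simp add: IF_def IG_def)
    also have "\<dots> \<le> IFG"
      unfolding IFG_def
      by (rule integral_mono) (use iF iG iFG powr_add_ge_weighted[OF q t] nonneg in auto)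
    finally have "(S powr q) powr (1 / q) \<le> IFG powr (1 / q)"
      using S q by (intro powr_mono2) auto
    then show ?thesis using S q by (simp add: powr_powr S_def)
  qed
  then show ?thesis by (simp add: a_def b_def IF_def IG_def IFG_def)
qed

lemma Lp_norm_two_uniform_convexity:
  fixes p :: real and x y :: "'a \<Rightarrow> real"
  assumes p: "1 < p" "p \<le> 2" and x: "in_Lp M p x" and y: "in_Lp M p y"
  shows "2 * Lp_norm M p x ^ 2 + 2 * (p - 1) * Lp_norm M p y ^ 2
          \<le> Lp_norm M p (\<lambda>z. x z + y z) ^ 2 + Lp_norm M p (\<lambda>z. x z - y z) ^ 2"
proof -
  have [measurable]: "x \<in> borel_measurable M" "y \<in> borel_measurable M"
    using x y by (auto simp: in_Lp_def)
  \<comment> \<open>Integrate the two-point inequality; reverse Minkowski for the exponent p/2 \<le> 1 handles the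
    left-hand side and convexity of t powr (2/p) the right-hand side.\<close>
  define q where "q = p / 2"
  have q: "0 < q" "q \<le> 1" "1 / q = 2 / p" using p by (auto simp: q_def)
  define F G where "F z = (x z)^2" and "G z = (p - 1) * (y z)^2" for z
  define N1 N2 where "N1 = (\<integral>z. \<bar>x z + y z\<bar> powr p \<partial>M)" and "N2 = (\<integral>z. \<bar>x z - y z\<bar> powr p \<partial>M)"
  have nonneg: "\<And>z. 0 \<le> F z" "\<And>z. 0 \<le> G z" using p by (auto simp: F_def G_def)
  have Fq: "F z powr q = \<bar>x z\<bar> powr p" for z
    by (simp add: F_def q_def power2_powr_half)
  have Gq: "G z powr q = (p - 1) powr q * \<bar>y z\<bar> powr p" for z
    using p by (simp add: G_def q_def power2_powr_half powr_mult)
  have ixy: "in_Lp M p (\<lambda>z. x z + y z)" "in_Lp M p (\<lambda>z. x z - y z)"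
    using p x y by (auto intro: in_Lp_add in_Lp_diff)
  have two_point: "(F z + G z) powr q \<le> (\<bar>x z + y z\<bar> powr p + \<bar>x z - y z\<bar> powr p) / 2" for z
    using two_point_ineq[OF p, of "x z" "y z"] by (simp add: F_def G_def q_def)
  have iF: "integrable M (\<lambda>z. F z powr q)" unfolding Fq using x by (simp add: in_Lp_def)
  have iG: "integrable M (\<lambda>z. G z powr q)" unfolding Gq using y by (simp add: in_Lp_def)
  have iS: "integrable M (\<lambda>z. (\<bar>x z + y z\<bar> powr p + \<bar>x z - y z\<bar> powr p) / 2)"
    using ixy by (simp add: in_Lp_def)
  have iFG: "integrable M (\<lambda>z. (F z + G z) powr q)"
    by (rule Bochner_Integration.integrable_bound[OF iS]) (use two_point nonneg in \<open>auto simp: F_def G_def\<close>)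
  have "Lp_norm M p x ^ 2 + (p - 1) * Lp_norm M p y ^ 2
      = (\<integral>z. F z powr q \<partial>M) powr (1 / q) + (\<integral>z. G z powr q \<partial>M) powr (1 / q)"
  proof -
    have "((p - 1) powr q * (\<integral>z. \<bar>y z\<bar> powr p \<partial>M)) powr (2 / p)
        = (p - 1) * (\<integral>z. \<bar>y z\<bar> powr p \<partial>M) powr (2 / p)"
      using p by (simp add: powr_mult powr_powr q_def integral_nonneg_AE)
    then show ?thesis
      using p by (simp add: Fq Gq q Lp_norm_power2)
  qed
  also have "\<dots> \<le> (\<integral>z. (F z + G z) powr q \<partial>M) powr (1 / q)"
    by (rule reverse_Minkowski_powr[OF q(1,2) nonneg iF iG iFG])
  also have "\<dots> \<le> ((N1 + N2) / 2) powr (2 / p)"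
  proof -
    have "(\<integral>z. (F z + G z) powr q \<partial>M) \<le> (N1 + N2) / 2"
      using ixy two_point by (intro order_trans[OF integral_mono[OF iFG iS]]) (auto simp: N1_def N2_def in_Lp_def)
    then show ?thesis unfolding q(3) using p by (intro powr_mono2 integral_nonneg_AE) auto
  qed
  also have "\<dots> \<le> (N1 powr (2 / p) + N2 powr (2 / p)) / 2"
    using convex_onD[OF convex_on_nonneg_powr, of "2 / p" "1 / 2" N1 N2] p
    by (simp add: N1_def N2_def integral_nonneg_AE add_divide_distrib)
  also have "\<dots> = (Lp_norm M p (\<lambda>z. x z + y z) ^ 2 + Lp_norm M p (\<lambda>z. x z - y z) ^ 2) / 2"
    using p by (simp add: Lp_norm_power2 N1_def N2_def)
  finally show ?thesis by (simp add: algebra_simps)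
qed

lemma Ricard_Xu_inequality:
  fixes p :: real and a b :: "'a \<Rightarrow> real"
  assumes p: "1 < p" "p \<le> 2" and a: "in_Lp M p a" and b: "in_Lp M p b"
    and min: "\<And>t. 0 \<le> t \<Longrightarrow> t \<le> 1 \<Longrightarrow> Lp_norm M p a \<le> Lp_norm M p (\<lambda>z. a z + t * b z)"
  shows "Lp_norm M p a ^ 2 + (p - 1) * Lp_norm M p b ^ 2 \<le> Lp_norm M p (\<lambda>z. a z + b z) ^ 2"
proof -
  define \<phi> where "\<phi> t = Lp_norm M p (\<lambda>z. a z + t * b z) ^ 2" for t
  have "\<phi> 0 + (p - 1) * Lp_norm M p b ^ 2 \<le> \<phi> 1"
  proof (rule midpoint_quadratic_gain)
    show "0 \<le> (p - 1) * Lp_norm M p b ^ 2" using p by simp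
  next
    fix t :: real assume "0 \<le> t" "t \<le> 1"
    then show "\<phi> 0 \<le> \<phi> t" unfolding \<phi>_def using min by (simp add: Lp_norm_nonneg power_mono)
  next
    fix h :: real assume h: "0 < h" "h \<le> 1"
    define x y where "x = (\<lambda>z. a z + (h / 2) * b z)" and "y = (\<lambda>z. (h / 2) * b z)"
    have "in_Lp M p x" unfolding x_def using p by (intro in_Lp_add in_Lp_cmult a b) auto
    moreover have "in_Lp M p y" unfolding y_def by (intro in_Lp_cmult b)
    ultimately have "2 * Lp_norm M p x ^ 2 + 2 * (p - 1) * Lp_norm M p y ^ 2
        \<le> Lp_norm M p (\<lambda>z. x z + y z) ^ 2 + Lp_norm M p (\<lambda>z. x z - y z) ^ 2"
      by (rule Lp_norm_two_uniform_convexity[OF p])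
    moreover have "(\<lambda>z. x z + y z) = (\<lambda>z. a z + h * b z)" "(\<lambda>z. x z - y z) = a"
      by (auto simp: x_def y_def field_simps)
    moreover have "Lp_norm M p x ^ 2 = \<phi> (h / 2)" by (simp add: \<phi>_def x_def)
    moreover have "Lp_norm M p y = \<bar>h / 2\<bar> * Lp_norm M p b"
      unfolding y_def by (rule Lp_norm_cmult) (use p in simp)
    then have "Lp_norm M p y ^ 2 = (h / 2)^2 * Lp_norm M p b ^ 2"
      by (simp only: power_mult_distrib power2_abs)
    ultimately have "2 * \<phi> (h / 2) + 2 * (p - 1) * ((h / 2)^2 * Lp_norm M p b ^ 2) \<le> \<phi> h + \<phi> 0"
      by (simp add: \<phi>_def)
    then show "2 * \<phi> (h / 2) + 2 * ((p - 1) * Lp_norm M p b ^ 2) * (h / 2)^2 \<le> \<phi> 0 + \<phi> h"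
      by (simp add: algebra_simps)
  qed
  then show ?thesis by (simp add: \<phi>_def)
qed

section \<open>Conditional expectations on finite partitions\<close>

abbreviation partition_cond_exp :: "'a measure \<Rightarrow> 'a set set \<Rightarrow> ('a \<Rightarrow> real) \<Rightarrow> 'a \<Rightarrow> real" where
  "partition_cond_exp M Q g \<equiv> real_cond_exp M (part_algebra M Q) g"

lemma space_part_algebra [simp]: "space (part_algebra M Q) = space M"
  by (simp add: part_algebra_def space_measure_of_conv)

lemma sets_part_algebra: "Q \<subseteq> Pow (space M) \<Longrightarrow> sets (part_algebra M Q) = sigma_sets (space M) Q"
  by (simp add: part_algebra_def sets_measure_of_conv)

lemma subalgebra_part_algebra:
  assumes "Q \<subseteq> sets M"
  shows "subalgebra M (part_algebra M Q)"
proof -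
  have "Q \<subseteq> Pow (space M)" using assms sets.sets_into_space by blast
  then have "sets (part_algebra M Q) = sigma_sets (space M) Q" by (rule sets_part_algebra)
  also have "\<dots> \<subseteq> sets M" using assms by (rule sets.sigma_sets_subset)
  finally show ?thesis by (simp add: subalgebra_def)
qed

lemma (in prob_space) sigma_finite_subalgebra_part_algebra:
  assumes "Q \<subseteq> sets M"
  shows "sigma_finite_subalgebra M (part_algebra M Q)"
proof -
  have "finite_measure_subalgebra M (part_algebra M Q)"
    using subalgebra_part_algebra[OF assms] by unfold_locales
  then show ?thesis by (rule finite_measure_subalgebra_is_sigma_finite)
qed

lemma Union_in_part_algebra:
  assumes "finite Q" "Q \<subseteq> Pow (space M)" "X \<subseteq> Q"
  shows "\<Union>X \<in> sets (part_algebra M Q)"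
proof -
  have "X \<subseteq> sets (part_algebra M Q)" using assms sets_part_algebra[OF assms(2)] by auto
  moreover have "finite X" using assms finite_subset by blast
  ultimately show ?thesis by (intro sets.finite_Union)
qed

lemma partition_cell_eq_Union_refinement:
  assumes P: "finite_partition \<Omega> P" and Q: "finite_partition \<Omega> Q" and "refines Q P" and A: "A \<in> P"
  shows "A = \<Union>{B\<in>Q. B \<subseteq> A}"
proof (intro equalityI subsetI)
  fix x assume x: "x \<in> A"
  have "A \<subseteq> \<Union>Q" using P Q A by (auto simp: finite_partition_def partition_on_def)
  with x obtain B where B: "B \<in> Q" "x \<in> B" by auto
  then obtain A' where A': "A' \<in> P" "B \<subseteq> A'" using \<open>refines Q P\<close> by (auto simp: refines_def)
  have "A' = A"
  proof (rule ccontr)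
    assume "A' \<noteq> A"
    then have "disjnt A' A"
      using P A A'(1) by (auto simp: finite_partition_def partition_on_def pairwise_def)
    then show False using x B A' by (auto simp: disjnt_def)
  qed
  then show "x \<in> \<Union>{B\<in>Q. B \<subseteq> A}" using A' B by auto
qed auto

lemma subalgebra_part_algebra_refines:
  assumes P: "finite_partition (space M) P" and Q: "finite_partition (space M) Q" and "refines Q P"
  shows "subalgebra (part_algebra M Q) (part_algebra M P)"
proof -
  have QP: "Q \<subseteq> Pow (space M)" and PP: "P \<subseteq> Pow (space M)"
    using P Q by (auto simp: finite_partition_def partition_on_def)
  have "P \<subseteq> sigma_sets (space M) Q"
  proof
    fix A assume "A \<in> P"
    then have "A = \<Union>{B\<in>Q. B \<subseteq> A}"
      by (rule partition_cell_eq_Union_refinement[OF P Q \<open>refines Q P\<close>])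
    also have "\<dots> \<in> sets (part_algebra M Q)"
      using Q QP by (intro Union_in_part_algebra) (auto simp: finite_partition_def)
    finally show "A \<in> sigma_sets (space M) Q" using sets_part_algebra[OF QP] by simp
  qed
  then have "sigma_sets (space M) P \<subseteq> sigma_sets (space M) Q" by (rule sigma_sets_mono)
  then show ?thesis by (simp add: subalgebra_def sets_part_algebra[OF QP] sets_part_algebra[OF PP])
qed

context sigma_finite_subalgebra
begin

lemma real_cond_exp_in_Lp:
  assumes "prob_space M" "in_Lp M p f" "1 \<le> p"
  shows "in_Lp M p (real_cond_exp M F f)"
proof -
  interpret prob_space M by fact
  have "integrable M f" using in_Lp_integrable assms(2,3) by blast
  moreover have "integrable M (\<lambda>x. \<bar>f x\<bar> powr p)" using assms(2) by (simp add: in_Lp_def)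
  moreover have "(\<lambda>x::real. \<bar>x\<bar> powr p) \<in> borel_measurable borel" by measurable
  ultimately have "integrable M (\<lambda>x. \<bar>real_cond_exp M F f x\<bar> powr p)"
    by (intro integrable_convex_cond_exp[where I = UNIV and q = "\<lambda>x. \<bar>x\<bar> powr p"]
        convex_on_abs_powr[OF assms(3)]) auto
  then show ?thesis by (simp add: in_Lp_def)
qed

lemma Lp_norm_real_cond_exp_le:
  assumes "prob_space M" "in_Lp M p f" "1 \<le> p"
  shows "Lp_norm M p (real_cond_exp M F f) \<le> Lp_norm M p f"
proof -
  interpret prob_space M by fact
  have fi: "integrable M f" using in_Lp_integrable assms(2,3) by blast
  have iq: "integrable M (\<lambda>x. \<bar>f x\<bar> powr p)" using assms(2) by (simp add: in_Lp_def)
  have qm: "(\<lambda>x::real. \<bar>x\<bar> powr p) \<in> borel_measurable borel" by measurable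
  have AE: "AE x in M. \<bar>real_cond_exp M F f x\<bar> powr p \<le> real_cond_exp M F (\<lambda>x. \<bar>f x\<bar> powr p) x"
    by (rule real_cond_exp_jensens_inequality(2)[where I = UNIV and q = "\<lambda>x. \<bar>x\<bar> powr p",
          OF fi _ _ iq convex_on_abs_powr[OF assms(3)] qm]) auto
  have "integrable M (\<lambda>x. \<bar>real_cond_exp M F f x\<bar> powr p)"
    using real_cond_exp_in_Lp[OF assms] by (simp add: in_Lp_def)
  then have "(\<integral>x. \<bar>real_cond_exp M F f x\<bar> powr p \<partial>M) \<le> (\<integral>x. real_cond_exp M F (\<lambda>x. \<bar>f x\<bar> powr p) x \<partial>M)"
    by (rule integral_mono_AE[OF _ real_cond_exp_int(1)[OF iq] AE])
  also have "\<dots> = (\<integral>x. \<bar>f x\<bar> powr p \<partial>M)" by (rule real_cond_exp_int(2)[OF iq])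
  finally show ?thesis
    unfolding Lp_norm_def using assms by (intro powr_mono2 integral_nonneg_AE) auto
qed

end

lemma Lp_norm_cond_exp_refinement:
  fixes p :: real and f :: "'a \<Rightarrow> real"
  assumes M: "prob_space M" and p: "1 < p" "p \<le> 2"
    and P: "finite_partition (space M) P" "P \<subseteq> sets M"
    and Q: "finite_partition (space M) Q" "Q \<subseteq> sets M"
    and "refines Q P" and f: "in_Lp M p f"
  shows "Lp_norm M p (partition_cond_exp M P f) ^ 2
         + (p - 1) * Lp_norm M p (\<lambda>x. partition_cond_exp M Q f x - partition_cond_exp M P f x) ^ 2
         \<le> Lp_norm M p (partition_cond_exp M Q f) ^ 2"
proof -
  interpret prob_space M by fact
  interpret FP: sigma_finite_subalgebra M "part_algebra M P"
    using sigma_finite_subalgebra_part_algebra[OF P(2)] .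
  interpret FQ: sigma_finite_subalgebra M "part_algebra M Q"
    using sigma_finite_subalgebra_part_algebra[OF Q(2)] .
  define a g where "a = partition_cond_exp M P f" and "g = partition_cond_exp M Q f"
  define b where "b = (\<lambda>z. g z - a z)"
  have p1: "1 \<le> p" using p by simp
  have fi: "integrable M f" using in_Lp_integrable[OF f p1] .
  have la: "in_Lp M p a" unfolding a_def by (rule FP.real_cond_exp_in_Lp[OF M f p1])
  have lg: "in_Lp M p g" unfolding g_def by (rule FQ.real_cond_exp_in_Lp[OF M f p1])
  have lb: "in_Lp M p b" unfolding b_def using la lg p by (intro in_Lp_diff) auto
  have [measurable]: "a \<in> borel_measurable M" using la by (simp add: in_Lp_def)
  have ia: "integrable M a" and ig: "integrable M g" and ib: "integrable M b"
    using la lg lb p1 by (auto intro: in_Lp_integrable)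
  \<comment> \<open>Since E_P (a + t b) = a, contractivity of E_P makes a the norm minimiser along the segment.\<close>
  have "Lp_norm M p a \<le> Lp_norm M p (\<lambda>z. a z + t * b z)" if "0 \<le> t" "t \<le> 1" for t
  proof -
    have "AE z in M. partition_cond_exp M P (\<lambda>z. a z + t * b z) z
            = partition_cond_exp M P a z + partition_cond_exp M P (\<lambda>z. t * b z) z"
      using ib by (intro FP.real_cond_exp_add[OF ia]) simp
    moreover have "AE z in M. partition_cond_exp M P (\<lambda>z. t * b z) z = t * partition_cond_exp M P b z"
      by (rule FP.real_cond_exp_cmult[OF ib])
    moreover have "AE z in M. partition_cond_exp M P b z = partition_cond_exp M P g z - partition_cond_exp M P a z"
      unfolding b_def by (rule FP.real_cond_exp_diff[OF ig ia])
    moreover have "AE z in M. partition_cond_exp M P g z = a z"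
      unfolding g_def a_def
      using FP.real_cond_exp_nested_subalg[OF subalgebra_part_algebra[OF Q(2)]
          subalgebra_part_algebra_refines[OF P(1) Q(1) \<open>refines Q P\<close>] fi] .
    moreover have "AE z in M. partition_cond_exp M P a z = a z"
      using FP.real_cond_exp_F_meas[OF ia] by (simp add: a_def)
    ultimately have AE: "AE z in M. partition_cond_exp M P (\<lambda>z. a z + t * b z) z = a z"
      by eventually_elim simp
    have "Lp_norm M p a = Lp_norm M p (partition_cond_exp M P (\<lambda>z. a z + t * b z))"
      unfolding Lp_norm_def by (intro arg_cong[where f = "\<lambda>x. x powr (1 / p)"] integral_cong_AE) (use AE in auto)
    also have "\<dots> \<le> Lp_norm M p (\<lambda>z. a z + t * b z)"
      using la lb p by (intro FP.Lp_norm_real_cond_exp_le[OF M] in_Lp_add in_Lp_cmult) auto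
    finally show ?thesis .
  qed
  from Ricard_Xu_inequality[OF p la lb this]
  show ?thesis by (simp add: a_def g_def b_def)
qed

lemma abs_set_integral_cond_exp_residual_le:
  fixes p :: real and f :: "'a \<Rightarrow> real"
  assumes M: "prob_space M" and p: "1 \<le> p" and "P \<subseteq> sets M" "Q \<subseteq> sets M"
    and f: "in_Lp M p f" and S: "S \<in> sets (part_algebra M Q)"
  shows "\<bar>set_lebesgue_integral M S (\<lambda>x. f x - partition_cond_exp M P f x)\<bar>
         \<le> Lp_norm M p (\<lambda>x. partition_cond_exp M Q f x - partition_cond_exp M P f x)"
proof -
  interpret prob_space M by fact
  interpret FP: sigma_finite_subalgebra M "part_algebra M P"
    using sigma_finite_subalgebra_part_algebra[OF assms(3)] .
  interpret FQ: sigma_finite_subalgebra M "part_algebra M Q"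
    using sigma_finite_subalgebra_part_algebra[OF assms(4)] .
  define a g where "a = partition_cond_exp M P f" and "g = partition_cond_exp M Q f"
  have SM: "S \<in> sets M" using S subalgebra_part_algebra[OF assms(4)] by (auto simp: subalgebra_def)
  have fi: "integrable M f" using in_Lp_integrable[OF f p] .
  have la: "in_Lp M p a" unfolding a_def by (rule FP.real_cond_exp_in_Lp[OF M f p])
  have lg: "in_Lp M p g" unfolding g_def by (rule FQ.real_cond_exp_in_Lp[OF M f p])
  have ia: "integrable M a" and ig: "integrable M g"
    using la lg p by (auto intro: in_Lp_integrable)
  have si: "set_integrable M S h" if "integrable M h" for h :: "'a \<Rightarrow> real"
    unfolding set_integrable_def using integrable_mult_indicator[OF SM that] by simp
  have "set_lebesgue_integral M S (\<lambda>x. f x - a x) = set_lebesgue_integral M S f - set_lebesgue_integral M S a"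
    by (rule set_integral_diff(2)[OF si[OF fi] si[OF ia]])
  also have "set_lebesgue_integral M S f = set_lebesgue_integral M S g"
    unfolding g_def by (rule FQ.real_cond_exp_intA[OF fi S])
  also have "set_lebesgue_integral M S g - set_lebesgue_integral M S a = set_lebesgue_integral M S (\<lambda>x. g x - a x)"
    by (rule set_integral_diff(2)[OF si[OF ig] si[OF ia], symmetric])
  finally have "set_lebesgue_integral M S (\<lambda>x. f x - a x) = set_lebesgue_integral M S (\<lambda>x. g x - a x)" .
  moreover have "\<bar>set_lebesgue_integral M S (\<lambda>x. g x - a x)\<bar> \<le> Lp_norm M p (\<lambda>x. g x - a x)"
    using la lg p by (intro abs_set_integral_le_Lp_norm[OF SM] in_Lp_diff) auto
  ultimately show ?thesis by (simp add: a_def g_def)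
qed

section \<open>Refining partitions inside a k-semiring\<close>

lemma partition_on_UN_partitions:
  assumes Q: "partition_on \<Omega> Q" and C: "\<And>A. A \<in> Q \<Longrightarrow> partition_on A (C A)"
  shows "partition_on \<Omega> (\<Union>A\<in>Q. C A)"
proof (rule partition_onI)
  have "\<Union>(\<Union>A\<in>Q. C A) = (\<Union>A\<in>Q. \<Union>(C A))" by blast
  also have "\<dots> = (\<Union>A\<in>Q. A)" by (intro SUP_cong refl) (metis C partition_onD1)
  finally show "\<Union>(\<Union>A\<in>Q. C A) = \<Omega>" using Q by (simp add: partition_on_def)
  show "{} \<notin> (\<Union>A\<in>Q. C A)"
    using C by (auto simp: partition_on_def)
next
  fix X Y assume "X \<in> (\<Union>A\<in>Q. C A)" "Y \<in> (\<Union>A\<in>Q. C A)" "X \<noteq> Y"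
  then obtain A B where AB: "A \<in> Q" "B \<in> Q" "X \<in> C A" "Y \<in> C B" by auto
  then have "X \<subseteq> A" "Y \<subseteq> B" using C by (auto simp: partition_on_def)
  show "disjnt X Y"
  proof (cases "A = B")
    case True
    then show ?thesis
      using C[OF AB(1)] AB \<open>X \<noteq> Y\<close> by (auto simp: partition_on_def pairwise_def)
  next
    case False
    then have "disjnt A B" using Q AB by (auto simp: partition_on_def pairwise_def)
    then show ?thesis using \<open>X \<subseteq> A\<close> \<open>Y \<subseteq> B\<close> by (rule disjnt_subset1[THEN disjnt_subset2])
  qed
qed

lemma k_semiring_Pow: "k_semiring k \<Omega> \<Sigma> \<Longrightarrow> \<Sigma> \<subseteq> Pow \<Omega>"
  by (simp add: k_semiring_def)

lemma k_semiring_Int: "k_semiring k \<Omega> \<Sigma> \<Longrightarrow> S \<in> \<Sigma> \<Longrightarrow> T \<in> \<Sigma> \<Longrightarrow> S \<inter> T \<in> \<Sigma>"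
  by (simp add: k_semiring_def)

lemma k_semiring_Diff:
  assumes "k_semiring k \<Omega> \<Sigma>" "S \<in> \<Sigma>" "T \<in> \<Sigma>"
  obtains l R where "l \<le> k" "\<And>i. i < l \<Longrightarrow> R i \<in> \<Sigma>" "disjoint_family_on R {..<l}"
    "S - T = (\<Union>i<l. R i)"
proof -
  have "\<forall>S\<in>\<Sigma>. \<forall>T\<in>\<Sigma>. \<exists>l R. 1 \<le> l \<and> l \<le> k \<and> (\<forall>i<l. R i \<in> \<Sigma>) \<and>
      disjoint_family_on R {..<l} \<and> S - T = (\<Union>i<l. R i)"
    using assms(1) by (simp add: k_semiring_def)
  from this[rule_format, OF assms(2,3)] obtain l R
    where "l \<le> k \<and> (\<forall>i<l. R i \<in> \<Sigma>) \<and> disjoint_family_on R {..<l} \<and> S - T = (\<Union>i<l. R i)"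
    by blast
  then show ?thesis by (intro that[of l R]) auto
qed

lemma k_semiring_split_cell:
  assumes \<Sigma>: "k_semiring k \<Omega> \<Sigma>" and A: "A \<in> \<Sigma>" and S: "S \<in> \<Sigma>"
  obtains C where "C \<subseteq> \<Sigma>" "finite C" "card C \<le> k + 1" "partition_on A C"
    "\<And>X. X \<in> C \<Longrightarrow> X \<subseteq> S \<or> disjnt X S"
proof -
  obtain l R where l: "l \<le> k" and R: "\<And>i. i < l \<Longrightarrow> R i \<in> \<Sigma>" "disjoint_family_on R {..<l}"
    and diff: "A - S = (\<Union>i<l. R i)"
    using k_semiring_Diff[OF \<Sigma> A S] by blast
  define C where "C = insert (A \<inter> S) (R ` {..<l}) - {{}}"
  have RS: "R i \<subseteq> A" "R i \<inter> S = {}" if "i < l" for i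
    using that diff by blast+
  have "C \<subseteq> \<Sigma>" using k_semiring_Int[OF \<Sigma> A S] R by (auto simp: C_def)
  moreover have "finite C" by (simp add: C_def)
  moreover have "card C \<le> k + 1"
  proof -
    have "card C \<le> card (insert (A \<inter> S) (R ` {..<l}))" by (intro card_mono) (auto simp: C_def)
    also have "\<dots> \<le> Suc (card (R ` {..<l}))" by (rule card_insert_le_m1) auto
    also have "card (R ` {..<l}) \<le> l" using card_image_le[of "{..<l}" R] by simp
    finally show ?thesis using l by simp
  qed
  moreover have "partition_on A C"
  proof (rule partition_onI)
    have "\<Union>C = (A \<inter> S) \<union> (\<Union>i<l. R i)" by (auto simp: C_def)
    also have "\<dots> = A" unfolding diff[symmetric] by blast
    finally show "\<Union>C = A" .
    show "{} \<notin> C" by (simp add: C_def)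
  next
    fix X Y assume "X \<in> C" "Y \<in> C" "X \<noteq> Y"
    moreover have "R i \<inter> R j = {}" if "i < l" "j < l" "R i \<noteq> R j" for i j
    proof -
      have "i \<noteq> j" using that(3) by blast
      then show ?thesis using R(2) that(1,2) by (simp add: disjoint_family_on_def)
    qed
    moreover have "X = A \<inter> S \<or> (\<exists>i<l. X = R i)" "Y = A \<inter> S \<or> (\<exists>i<l. Y = R i)"
      using \<open>X \<in> C\<close> \<open>Y \<in> C\<close> by (auto simp: C_def)
    ultimately show "disjnt X Y"
      using \<open>X \<noteq> Y\<close> RS(2) unfolding disjnt_def by blast
  qed
  moreover have "X \<subseteq> S \<or> disjnt X S" if "X \<in> C" for X
    using that RS(2) unfolding C_def disjnt_def by blast
  ultimately show ?thesis by (rule that)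
qed

lemma k_semiring_refine_partition:
  assumes \<Sigma>: "k_semiring k (space M) \<Sigma>"
    and Q: "finite_partition (space M) Q" "Q \<subseteq> \<Sigma>" and S: "S \<in> \<Sigma>"
  obtains Q' where "finite_partition (space M) Q'" "Q' \<subseteq> \<Sigma>" "card Q' \<le> (k + 1) * card Q"
    "refines Q' Q" "S \<in> sets (part_algebra M Q')"
proof -
  have "\<forall>A\<in>Q. \<exists>C. C \<subseteq> \<Sigma> \<and> finite C \<and> card C \<le> k + 1 \<and> partition_on A C \<and>
      (\<forall>X\<in>C. X \<subseteq> S \<or> disjnt X S)"
    using k_semiring_split_cell[OF \<Sigma> _ S] Q(2) by (metis subsetD)
  then obtain C where C: "\<And>A. A \<in> Q \<Longrightarrow> C A \<subseteq> \<Sigma> \<and> finite (C A) \<and> card (C A) \<le> k + 1 \<and>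
      partition_on A (C A) \<and> (\<forall>X\<in>C A. X \<subseteq> S \<or> disjnt X S)"
    by metis
  define Q' where "Q' = (\<Union>A\<in>Q. C A)"
  have fin: "finite Q" and part: "partition_on (space M) Q" using Q by (auto simp: finite_partition_def)
  have part': "partition_on (space M) Q'"
    unfolding Q'_def using part C by (intro partition_on_UN_partitions) auto
  have fin': "finite Q'" using fin C by (auto simp: Q'_def)
  then have "finite_partition (space M) Q'" using part' by (simp add: finite_partition_def)
  moreover have "Q' \<subseteq> \<Sigma>" using C by (auto simp: Q'_def)
  moreover have "card Q' \<le> (k + 1) * card Q"
  proof -
    have "card Q' \<le> (\<Sum>A\<in>Q. card (C A))" unfolding Q'_def by (rule card_UN_le[OF fin])
    also have "\<dots> \<le> (\<Sum>A\<in>Q. k + 1)" using C by (intro sum_mono) auto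
    finally show ?thesis by (simp add: algebra_simps)
  qed
  moreover have "refines Q' Q" using C by (auto simp: refines_def Q'_def partition_on_def)
  moreover have "S \<in> sets (part_algebra M Q')"
  proof -
    have "S \<subseteq> \<Union>Q'" using k_semiring_Pow[OF \<Sigma>] S part' by (auto simp: partition_on_def)
    moreover have "X \<subseteq> S \<or> disjnt X S" if "X \<in> Q'" for X
      using that C by (auto simp: Q'_def)
    ultimately have "S = \<Union>{X\<in>Q'. X \<subseteq> S}" unfolding disjnt_def by blast
    also have "\<dots> \<in> sets (part_algebra M Q')"
      using fin' part' by (intro Union_in_part_algebra) (auto simp: partition_on_def)
    finally show ?thesis .
  qed
  ultimately show ?thesis by (rule that)
qed

section \<open>The energy increment argument\<close>

locale partition_regularity = prob_space M for M :: "'a measure" +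
  fixes p :: real and k :: nat and \<Sigma> :: "nat \<Rightarrow> 'a set set" and l :: nat and f :: "nat \<Rightarrow> 'a \<Rightarrow> real"
  assumes p: "1 < p" "p \<le> 2"
    and semiring: "\<And>i. k_semiring k (space M) (\<Sigma> i)"
    and \<Sigma>_Suc: "\<And>i. \<Sigma> i \<subseteq> \<Sigma> (Suc i)"
    and \<Sigma>_sets: "\<And>i. \<Sigma> i \<subseteq> sets M"
    and f_Lp: "\<And>i. i < l \<Longrightarrow> in_Lp M p (f i)"
    and f_norm: "\<And>i. i < l \<Longrightarrow> Lp_norm M p (f i) \<le> 1"
begin

definition admissible :: "nat \<Rightarrow> 'a set set \<Rightarrow> bool" where
  "admissible m Q \<longleftrightarrow> finite_partition (space M) Q \<and> Q \<subseteq> \<Sigma> m \<and> card Q \<le> (k + 1) ^ m"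

definition energy :: "'a set set \<Rightarrow> real" where
  "energy Q = (\<Sum>i<l. Lp_norm M p (partition_cond_exp M Q (f i)) ^ 2)"

definition drift :: "'a set set \<Rightarrow> 'a set set \<Rightarrow> nat \<Rightarrow> real" where
  "drift P Q i = Lp_norm M p (\<lambda>x. partition_cond_exp M Q (f i) x - partition_cond_exp M P (f i) x)"

definition defect :: "nat \<Rightarrow> 'a set set \<Rightarrow> nat \<Rightarrow> real" where
  "defect J Q i = unif_norm M (\<Sigma> (Suc J)) (\<lambda>x. f i x - partition_cond_exp M Q (f i) x)"

lemma \<Sigma>_mono: "m \<le> m' \<Longrightarrow> \<Sigma> m \<subseteq> \<Sigma> m'"
  by (rule lift_Suc_mono_le[of \<Sigma>, OF \<Sigma>_Suc])

lemma admissible_sets: "admissible m Q \<Longrightarrow> Q \<subseteq> sets M"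
  using \<Sigma>_sets by (auto simp: admissible_def)

lemma admissible_mono:
  assumes "admissible m Q" "m \<le> m'"
  shows "admissible m' Q"
proof -
  have "(k + 1) ^ m \<le> (k + 1) ^ m'" using assms(2) by (intro power_increasing) auto
  then show ?thesis using assms \<Sigma>_mono[OF assms(2)] by (auto simp: admissible_def)
qed

lemma admissible_trivial: "admissible 0 {space M}"
proof -
  have "space M \<noteq> {}" "space M \<in> \<Sigma> 0" using semiring[of 0] by (auto simp: k_semiring_def)
  then show ?thesis by (simp add: admissible_def finite_partition_def partition_on_space)
qed

lemma energy_nonneg: "0 \<le> energy Q"
  by (simp add: energy_def sum_nonneg)

lemma energy_le:
  assumes "admissible m Q"
  shows "energy Q \<le> l"
proof -
  interpret FQ: sigma_finite_subalgebra M "part_algebra M Q"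
    using sigma_finite_subalgebra_part_algebra[OF admissible_sets[OF assms]] .
  have "Lp_norm M p (partition_cond_exp M Q (f i)) ^ 2 \<le> 1" if "i < l" for i
  proof -
    have "Lp_norm M p (partition_cond_exp M Q (f i)) \<le> 1"
      using FQ.Lp_norm_real_cond_exp_le[OF prob_space_axioms f_Lp[OF that]] f_norm[OF that] p by simp
    then show ?thesis using power_le_one[OF Lp_norm_nonneg] by blast
  qed
  then have "energy Q \<le> (\<Sum>i<l. 1)" unfolding energy_def by (intro sum_mono) auto
  then show ?thesis by simp
qed

lemma energy_increment:
  assumes "admissible m P" "admissible m' Q" "refines Q P"
  shows "energy P + (p - 1) * (\<Sum>i<l. drift P Q i ^ 2) \<le> energy Q"
proof -
  have "(\<Sum>i<l. Lp_norm M p (partition_cond_exp M P (f i)) ^ 2 + (p - 1) * drift P Q i ^ 2) \<le> energy Q"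
    unfolding energy_def drift_def using assms admissible_sets[OF assms(1)] admissible_sets[OF assms(2)]
    by (intro sum_mono Lp_norm_cond_exp_refinement[OF prob_space_axioms p] f_Lp) (auto simp: admissible_def)
  then show ?thesis by (simp add: energy_def sum.distrib sum_distrib_left)
qed

lemma energy_mono:
  assumes "admissible m P" "admissible m' Q" "refines Q P"
  shows "energy P \<le> energy Q"
proof -
  have "0 \<le> (p - 1) * (\<Sum>i<l. drift P Q i ^ 2)" using p by (intro mult_nonneg_nonneg sum_nonneg) auto
  then show ?thesis using energy_increment[OF assms] by linarith
qed

lemma energy_gain_drift:
  assumes "admissible m P" "admissible m' Q" "refines Q P" "i < l" "0 \<le> \<sigma>" "\<sigma> < drift P Q i"
  shows "energy P + (p - 1) * \<sigma>^2 < energy Q"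
proof -
  have "\<sigma>^2 < drift P Q i ^ 2" using assms(5,6) by (intro power_strict_mono) auto
  also have "\<dots> \<le> (\<Sum>i<l. drift P Q i ^ 2)" using assms(4) by (intro member_le_sum) auto
  finally have "(p - 1) * \<sigma>^2 < (p - 1) * (\<Sum>i<l. drift P Q i ^ 2)" using p by simp
  then show ?thesis using energy_increment[OF assms(1-3)] by linarith
qed

lemma energy_gain_defect:
  assumes Q: "admissible J Q" and "i < l" "0 \<le> c" "c < defect J Q i"
  obtains Q' where "admissible (Suc J) Q'" "refines Q' Q" "energy Q + (p - 1) * c^2 < energy Q'"
proof -
  let ?g = "\<lambda>x. f i x - partition_cond_exp M Q (f i) x"
  obtain S where S: "S \<in> \<Sigma> (Suc J)" and "c < \<bar>set_lebesgue_integral M S ?g\<bar>"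
  proof (rule ccontr)
    assume "\<not> thesis"
    then have "\<forall>S\<in>\<Sigma> (Suc J). \<bar>set_lebesgue_integral M S ?g\<bar> \<le> c" using that by (meson not_less)
    moreover have "\<Sigma> (Suc J) \<noteq> {}" using semiring[of "Suc J"] by (auto simp: k_semiring_def)
    ultimately have "defect J Q i \<le> c" unfolding defect_def unif_norm_def by (intro cSUP_least) auto
    then show False using assms(4) by simp
  qed
  have "finite_partition (space M) Q" "Q \<subseteq> \<Sigma> (Suc J)" using Q \<Sigma>_Suc by (auto simp: admissible_def)
  then obtain Q' where Q': "finite_partition (space M) Q'" "Q' \<subseteq> \<Sigma> (Suc J)"
      "card Q' \<le> (k + 1) * card Q" "refines Q' Q" "S \<in> sets (part_algebra M Q')"
    by (rule k_semiring_refine_partition[OF semiring _ _ S])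
  have "(k + 1) * card Q \<le> (k + 1) * (k + 1) ^ J"
    using Q by (intro mult_le_mono2) (simp add: admissible_def)
  then have "card Q' \<le> (k + 1) ^ Suc J" using Q'(3) by simp
  then have Q'_adm: "admissible (Suc J) Q'" using Q' by (simp add: admissible_def)
  have "c < drift Q Q' i"
    using \<open>c < \<bar>_\<bar>\<close> abs_set_integral_cond_exp_residual_le[OF prob_space_axioms _
        admissible_sets[OF Q] admissible_sets[OF Q'_adm] f_Lp[OF \<open>i < l\<close>] Q'(5)] p
    by (simp add: drift_def)
  then show ?thesis
    using that Q'_adm Q'(4) energy_gain_drift[OF Q Q'_adm Q'(4) \<open>i < l\<close> \<open>0 \<le> c\<close>] by blast
qed

lemma energy_growth_or_drift:
  assumes P: "admissible n P" and "0 \<le> c" "0 \<le> \<sigma>"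
    and irregular: "\<And>J Q. n \<le> J \<Longrightarrow> J < n + T \<Longrightarrow> admissible J Q \<Longrightarrow> refines Q P \<Longrightarrow>
        \<forall>i<l. drift P Q i \<le> \<sigma> \<Longrightarrow> \<exists>i<l. c < defect J Q i"
  shows "\<exists>Q. admissible (n + T) Q \<and> refines Q P \<and>
           (energy P + (p - 1) * \<sigma>^2 < energy Q \<or> T = 0 \<or> energy P + T * (p - 1) * c^2 < energy Q)"
  using irregular
proof (induction T)
  case 0
  show ?case using P by (auto simp: refines_def)
next
  case (Suc T)
  have "\<exists>i<l. c < defect J Q i"
    if "n \<le> J" "J < n + T" "admissible J Q" "refines Q P" "\<forall>i<l. drift P Q i \<le> \<sigma>" for J Q
    using that by (intro Suc.prems) auto
  from Suc.IH[OF this] obtain Q where Q: "admissible (n + T) Q" "refines Q P"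
    and gain: "energy P + (p - 1) * \<sigma>^2 < energy Q \<or> T = 0 \<or> energy P + T * (p - 1) * c^2 < energy Q"
    by blast
  have Q_Suc: "admissible (n + Suc T) Q" using Q(1) by (rule admissible_mono) simp
  consider "energy P + (p - 1) * \<sigma>^2 < energy Q" | i where "i < l" "\<sigma> < drift P Q i"
    | "\<forall>i<l. drift P Q i \<le> \<sigma>" "T = 0 \<or> energy P + T * (p - 1) * c^2 < energy Q"
    using gain by (meson not_le)
  then show ?case
  proof cases
    case 1
    then show ?thesis using Q_Suc Q(2) by blast
  next
    case 2
    then show ?thesis using Q_Suc Q(2) energy_gain_drift[OF P Q(1) Q(2) _ \<open>0 \<le> \<sigma>\<close>] by blast
  next
    case 3
    have "\<exists>i<l. c < defect (n + T) Q i" using 3(1) Q by (intro Suc.prems) auto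
    then obtain i where "i < l" "c < defect (n + T) Q i" by blast
    then obtain Q' where Q': "admissible (Suc (n + T)) Q'" "refines Q' Q" "energy Q + (p - 1) * c^2 < energy Q'"
      using energy_gain_defect[OF Q(1) _ \<open>0 \<le> c\<close>] by metis
    have "energy P \<le> energy Q" by (rule energy_mono[OF P Q(1,2)])
    then have "energy P + Suc T * (p - 1) * c^2 < energy Q'"
      using 3(2) Q'(3) by (auto simp: algebra_simps)
    moreover have "refines Q' P" using Q'(2) Q(2) unfolding refines_def by (meson order_trans)
    ultimately show ?thesis using Q'(1) by auto
  qed
qed

lemma energy_block_increment:
  assumes P: "admissible n P" and "0 < c" "0 < \<sigma>" "\<sigma>^2 \<le> T * c^2"
    and irregular: "\<And>J Q. n \<le> J \<Longrightarrow> J < n + T \<Longrightarrow> admissible J Q \<Longrightarrow> refines Q P \<Longrightarrow>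
        \<forall>i<l. drift P Q i \<le> \<sigma> \<Longrightarrow> \<exists>i<l. c < defect J Q i"
  shows "\<exists>Q. admissible (n + T) Q \<and> energy P + (p - 1) * \<sigma>^2 < energy Q"
proof -
  have "T \<noteq> 0"
  proof
    assume "T = 0"
    then have "\<sigma>^2 \<le> 0" using assms(4) by simp
    then show False using zero_less_power[OF assms(3), of 2] by linarith
  qed
  moreover have "(p - 1) * \<sigma>^2 \<le> T * (p - 1) * c^2"
    using assms(4) p by (simp add: mult.commute mult.left_commute)
  moreover have "\<exists>Q. admissible (n + T) Q \<and> refines Q P \<and>
      (energy P + (p - 1) * \<sigma>^2 < energy Q \<or> T = 0 \<or> energy P + T * (p - 1) * c^2 < energy Q)"
  proof (rule energy_growth_or_drift[OF P])
    show "0 \<le> c" "0 \<le> \<sigma>" using assms(2,3) by auto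
  next
    fix J Q assume "n \<le> J" "J < n + T" "admissible J Q" "refines Q P" "\<forall>i<l. drift P Q i \<le> \<sigma>"
    then show "\<exists>i<l. c < defect J Q i" by (rule irregular)
  qed
  ultimately show ?thesis by fastforce
qed

lemma regular_refinement_exists:
  fixes n :: "nat \<Rightarrow> nat" and c :: "nat \<Rightarrow> real" and L :: nat
  assumes "n 0 = 0" "0 < \<sigma>" "0 < L" "l \<le> L * ((p - 1) * \<sigma>^2)"
    and block: "\<And>j. j < L \<Longrightarrow> n j \<le> n (Suc j) \<and> 0 < c j \<and> \<sigma>^2 \<le> (n (Suc j) - n j) * (c j)^2"
  shows "\<exists>j<L. \<exists>J P Q. n j \<le> J \<and> J \<le> n (Suc j) \<and> admissible (n j) P \<and> admissible J Q \<and>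
           refines Q P \<and> (\<forall>i<l. drift P Q i \<le> \<sigma> \<and> defect J Q i \<le> c j)"
proof (rule ccontr)
  assume no_regular: "\<not> ?thesis"
  \<comment> \<open>Then every block raises the energy by (p - 1) \<sigma>^2, which the bound energy \<le> l forbids L times.\<close>
  have "\<exists>Q. admissible (n j) Q \<and> (j = 0 \<or> j * ((p - 1) * \<sigma>^2) < energy Q)" if "j \<le> L" for j
    using that
  proof (induction j)
    case 0
    show ?case using admissible_trivial assms(1) by auto
  next
    case (Suc j)
    then obtain P where P: "admissible (n j) P" and e: "j = 0 \<or> j * ((p - 1) * \<sigma>^2) < energy P"
      by auto
    have j: "j < L" using Suc.prems by simp
    have n_Suc: "n j + (n (Suc j) - n j) = n (Suc j)" using block[OF j] by simp
    have blk: "0 < c j" "\<sigma>^2 \<le> real (n (Suc j) - n j) * (c j)^2" using block[OF j] by auto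
    have irregular: "\<exists>i<l. c j < defect J Q i"
      if "n j \<le> J" "J < n j + (n (Suc j) - n j)" "admissible J Q" "refines Q P" "\<forall>i<l. drift P Q i \<le> \<sigma>" for J Q
    proof -
      have "J \<le> n (Suc j)" using that(2) n_Suc by linarith
      then have "\<not> (\<forall>i<l. drift P Q i \<le> \<sigma> \<and> defect J Q i \<le> c j)"
        using no_regular j P that(1,3,4) by blast
      then show ?thesis using that(5) by (auto simp: not_le)
    qed
    have "\<exists>Q. admissible (n j + (n (Suc j) - n j)) Q \<and> energy P + (p - 1) * \<sigma>^2 < energy Q"
    proof (rule energy_block_increment[OF P blk(1) \<open>0 < \<sigma>\<close> blk(2)])
      fix J Q
      assume "n j \<le> J" "J < n j + (n (Suc j) - n j)" "admissible J Q" "refines Q P" "\<forall>i<l. drift P Q i \<le> \<sigma>"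
      then show "\<exists>i<l. c j < defect J Q i" by (rule irregular)
    qed
    then obtain Q where "admissible (n (Suc j)) Q" "energy P + (p - 1) * \<sigma>^2 < energy Q"
      unfolding n_Suc by blast
    moreover have "j * ((p - 1) * \<sigma>^2) \<le> energy P" using e energy_nonneg[of P] by auto
    ultimately show ?case by (auto simp: algebra_simps)
  qed
  then obtain Q where "admissible (n L) Q" "L * ((p - 1) * \<sigma>^2) < energy Q"
    using \<open>0 < L\<close> by blast
  then show False using energy_le[of "n L" Q] assms(4) by linarith
qed

end

lemma growth_function_pos: "growth_function H \<Longrightarrow> 0 < H n"
  unfolding growth_function_def by (smt (verit) of_nat_0_le_iff)

lemma n_seq_block_length:
  assumes H: "growth_function H" and "0 < l" "0 < \<sigma>" "1 < p" "p \<le> 2"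
  shows "\<sigma>^2 \<le> real (n_seq \<sigma> l p H (Suc j) - n_seq \<sigma> l p H j) * (1 / H (n_seq \<sigma> l p H j))^2"
proof -
  define h where "h = H (n_seq \<sigma> l p H j)"
  have h: "0 < h" using growth_function_pos[OF H] by (simp add: h_def)
  have "1 \<le> real l / (p - 1)" using assms by (simp add: field_simps)
  then have "\<sigma>^2 * h^2 \<le> \<sigma>^2 * h^2 * (real l / (p - 1))"
    using mult_left_mono[of 1 "real l / (p - 1)" "\<sigma>^2 * h^2"] by simp
  also have "\<dots> \<le> real (nat \<lceil>\<sigma>^2 * real l * h^2 / (p - 1)\<rceil>)"
    by (rule order_trans[OF _ real_nat_ceiling_ge]) (simp add: field_simps)
  also have "\<dots> = real (n_seq \<sigma> l p H (Suc j) - n_seq \<sigma> l p H j)"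
    by (simp add: h_def)
  finally show ?thesis using h unfolding h_def[symmetric] by (simp add: field_simps)
qed

lemma L_bound_sufficient:
  assumes "0 < l" "0 < \<sigma>" "1 < p"
  shows "0 < L_bound \<sigma> l p" "real l \<le> real (L_bound \<sigma> l p) * ((p - 1) * \<sigma>^2)"
proof -
  have pos: "0 < \<sigma>^2 * (p - 1)" using assms by simp
  have le: "real l / (\<sigma>^2 * (p - 1)) \<le> real (L_bound \<sigma> l p)"
    unfolding L_bound_def by (rule real_nat_ceiling_ge)
  moreover have "0 < real l / (\<sigma>^2 * (p - 1))" using assms pos by simp
  ultimately show "0 < L_bound \<sigma> l p" by linarith
  show "real l \<le> real (L_bound \<sigma> l p) * ((p - 1) * \<sigma>^2)"
    using le pos by (simp add: field_simps)
qed

theorem lemma3p5: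
  fixes k l :: nat and \<sigma> p :: real and H :: "nat \<Rightarrow> real"
    and M :: "'a measure" and \<Sigma> :: "nat \<Rightarrow> 'a set set"
    and f :: "nat \<Rightarrow> 'a \<Rightarrow> real"
  assumes "k > 0" "l > 0" "0 < \<sigma>" "\<sigma> \<le> 1" "1 < p" "p \<le> 2"
    and "growth_function H"
    and "prob_space M"
    and "\<And>i. k_semiring k (space M) (\<Sigma> i)"
    and "\<And>i. \<Sigma> i \<subseteq> \<Sigma> (Suc i)"
    and "\<And>i. \<Sigma> i \<subseteq> sets M"
    and "\<And>i. i < l \<Longrightarrow> in_Lp M p (f i)"
    and "\<And>i. i < l \<Longrightarrow> Lp_norm M p (f i) \<le> 1"
  shows "\<exists>j < L_bound \<sigma> l p. \<exists>J. n_seq \<sigma> l p H j \<le> J \<and> J \<le> n_seq \<sigma> l p H (Suc j) \<and>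
          (\<exists>P Q. finite_partition (space M) P \<and> finite_partition (space M) Q \<and>
             P \<subseteq> \<Sigma> (n_seq \<sigma> l p H j) \<and> Q \<subseteq> \<Sigma> J \<and>
             card P \<le> (k + 1) ^ (n_seq \<sigma> l p H j) \<and> card Q \<le> (k + 1) ^ J \<and>
             refines Q P \<and>
             (\<forall>i < l.
                Lp_norm M p (\<lambda>x. real_cond_exp M (part_algebra M Q) (f i) x
                                 - real_cond_exp M (part_algebra M P) (f i) x) \<le> \<sigma> \<and>
                unif_norm M (\<Sigma> (Suc J)) (\<lambda>x. f i x - real_cond_exp M (part_algebra M Q) (f i) x)
                  \<le> 1 / H (n_seq \<sigma> l p H j)))"
proof -
  interpret partition_regularity M p k \<Sigma> l f
    using assms by (intro partition_regularity.intro partition_regularity_axioms.intro) auto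
  have "\<exists>j<L_bound \<sigma> l p. \<exists>J P Q. n_seq \<sigma> l p H j \<le> J \<and> J \<le> n_seq \<sigma> l p H (Suc j) \<and>
      admissible (n_seq \<sigma> l p H j) P \<and> admissible J Q \<and> refines Q P \<and>
      (\<forall>i<l. drift P Q i \<le> \<sigma> \<and> defect J Q i \<le> 1 / H (n_seq \<sigma> l p H j))"
    using assms L_bound_sufficient[of l \<sigma> p] n_seq_block_length[of H l \<sigma> p] growth_function_pos[of H]
    by (intro regular_refinement_exists) auto
  then show ?thesis unfolding admissible_def drift_def defect_def by blast
qed

end
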